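(* Let $\{x_i,v_i\}_{i\in[N]}$ be the global solution of the delayed Cucker–Smale system described in the context, and let $K$ be the smallest integer such that $K\sigma\ge2\tau$. Then for all $i,j\in[N]$, \[ |x_j(\tau)-x_i(2\tau-\sigma)|\le\Delta^0_x+\mathcal{W}^K_\sigma\Delta^0_v, \] where $\mathcal{W}^K_\sigma:=Z^K_\sigma-(1+\sigma)(Z^{K-1}_\sigma+1)$.
   Context: Let $N\ge2$, $d\ge1$ be integers, $[N]=\{1,\dots,N\}$, $0\le\sigma\le\tau$. Let $\psi:[0,\infty)\to[0,\infty)$ be continuous, nonincreasing, positive everywhere, with $\sup\psi\le1$. Given $x_i^0\in C^1([-\tau,0],\mathbb{R}^d)$, $v_i^0\in C([-\tau,0],\mathbb{R}^d)$ with $\frac{\mathrm d}{\mathrm dt}x_i^0=v_i^0$, $\{x_i,v_i\}$ is the global solution of $\dot x_i(t)=v_i(t)$, $\dot v_i(t)=\sum_{j\ne i}a_{ij}(t)(v_j(t-\tau)-v_i(t-\sigma))$ for $t>0$, with $a_{ij}(t)=\frac1{N-1}\psi(|x_i(t-\sigma)-x_j(t-\tau)|)$, and $x_i=x_i^0$, $v_i=v_i^0$ on $[-\tau,0]$. $\Delta^0_x:=\max_{i,j}\max_{s,t\in[-\tau,0]}|x_i^0(s)-x_j^0(t)|$, $\Delta^0_v:=\max_{i,j}\max_{s,t\in[-\tau,0]}|v_i^0(s)-v_j^0(t)|$. For $k\ge0$, \[ Z^k_\sigma:=\frac{1}{2\sqrt{\sigma(1+\sigma)}}\Big[\big((1+\sigma)+\sqrt{\sigma(1+\sigma)}\big)^{k+1}-\big((1+\sigma)-\sqrt{\sigma(1+\sigma)}\big)^{k+1}\Big],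 \] a polynomial in $\sigma$; equivalently $Z^0_\sigma=1$, $Z^k_\sigma=1+(1+\sigma)Z^{k-1}_\sigma+\sigma\sum_{m=0}^{k-1}Z^m_\sigma$ for $k\ge1$. *)

theory Defs
  imports "HOL-Analysis.Analysis"
begin

text \<open>The closed-form polynomial Z^k_sigma (used here only for sigma > 0).\<close>
definition Zs :: "real \<Rightarrow> nat \<Rightarrow> real" where
  "Zs \<sigma> k = (1 / (2 * sqrt (\<sigma> * (1 + \<sigma>)))) *
     (((1 + \<sigma>) + sqrt (\<sigma> * (1 + \<sigma>))) ^ (k + 1)
      - ((1 + \<sigma>) - sqrt (\<sigma> * (1 + \<sigma>))) ^ (k + 1))"

definition Ws :: "real \<Rightarrow> nat \<Rightarrow> real" where
  "Ws \<sigma> K = Zs \<sigma> K - (1 + \<sigma>) * (Zs \<sigma> (K - 1) + 1)"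

definition diam0 :: "nat \<Rightarrow> real \<Rightarrow> (nat \<Rightarrow> real \<Rightarrow> 'a::real_normed_vector) \<Rightarrow> real" where
  "diam0 N \<tau> f = (SUP p \<in> ({1..N} \<times> {1..N}) \<times> ({-\<tau>..0} \<times> {-\<tau>..0}).
       norm (f (fst (fst p)) (fst (snd p)) - f (snd (fst p)) (snd (snd p))))"

end

theory Submission
  imports Defs
begin

(*
  Over each delay step of length \<sigma> the alignment force is an average, with weights at most 1,
  of velocity differences at earlier times, so the velocity spread over [-\<tau>, k \<sigma>] is at most
  (1 + 2 \<sigma>)^k \<Delta>v. The gap g(u) = x_j(u + \<sigma> - \<tau>) - x_i(u) is at most \<Delta>x at u = 0, and on
  the step (l \<sigma>, (l + 1) \<sigma>] it grows at rate at most (1 + 2 \<sigma>)^(l + 1) \<Delta>v. Summing over the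
  K - 1 steps up to u = 2 \<tau> - \<sigma> and using (1 + 2 \<sigma>)^l \<le> Z^l bounds the growth by
  \<sigma> (Z^1 + ... + Z^(K - 1)) \<Delta>v, which equals W^K \<Delta>v by the recurrence for Z.
*)

lemma Zs_0: "0 < s \<Longrightarrow> Zs s 0 = 1"
  unfolding Zs_def by simp

lemma Zs_1:
  assumes "0 < s"
  shows "Zs s (Suc 0) = 2 * (1 + s)"
proof -
  have "0 < sqrt (s * (1 + s))"
    using assms by simp
  then show ?thesis
    unfolding Zs_def by (simp add: field_simps power2_eq_square)
qed

lemma Zs_Suc_Suc:
  assumes "0 < s"
  shows "Zs s (Suc (Suc k)) = 2 * (1 + s) * Zs s (Suc k) - (1 + s) * Zs s k"
proof -
  define r where "r = sqrt (s * (1 + s))"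
  define A B c where "A = 1 + s + r" and "B = 1 + s - r" and "c = 1 / (2 * r)"
  have Zs_eq: "Zs s n = c * (A ^ Suc n - B ^ Suc n)" for n
    unfolding Zs_def A_def B_def c_def r_def by simp
  have root_rec: "z ^ Suc (Suc (Suc k)) = 2 * (1 + s) * z ^ Suc (Suc k) - (1 + s) * z ^ Suc k"
    if "z = A \<or> z = B" for z
  proof -
    have "(z - (1 + s)) * (z - (1 + s)) = r * r"
      using that unfolding A_def B_def by auto
    also have "r * r = s * (1 + s)"
      using assms by (simp add: r_def)
    finally have "z * z = 2 * (1 + s) * z - (1 + s)"
      by (simp add: algebra_simps)
    then have "z ^ Suc k * (z * z) = z ^ Suc k * (2 * (1 + s) * z - (1 + s))"
      by simp
    then show ?thesis
      by (simp add: algebra_simps)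
  qed
  have diff_rec: "A ^ Suc (Suc (Suc k)) - B ^ Suc (Suc (Suc k))
      = 2 * (1 + s) * (A ^ Suc (Suc k) - B ^ Suc (Suc k)) - (1 + s) * (A ^ Suc k - B ^ Suc k)"
    unfolding root_rec[OF disjI1[OF refl]] root_rec[OF disjI2[OF refl]] by (simp add: algebra_simps)
  show ?thesis
    unfolding Zs_eq diff_rec by (simp add: algebra_simps)
qed

lemma Zs_Suc: "0 < s \<Longrightarrow> Zs s (Suc k) = 1 + (1 + s) * Zs s k + s * (\<Sum>m\<le>k. Zs s m)"
proof (induction k)
  case 0
  then show ?case by (simp add: Zs_0 Zs_1)
next
  case (Suc k)
  then show ?case by (simp add: Zs_Suc_Suc algebra_simps)
qed

lemma power_le_Zs:
  assumes "0 < s"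
  shows "(1 + 2 * s) ^ k \<le> Zs s k"
proof (induction k rule: less_induct)
  case (less k)
  show ?case
  proof (cases k)
    case 0
    then show ?thesis using assms by (simp add: Zs_0)
  next
    case (Suc k')
    have Zs_nonneg: "0 \<le> Zs s m" if "m \<le> k'" for m
      using less[of m] Suc that assms by (smt (verit) le_imp_less_Suc zero_le_power)
    have "Zs s k' \<le> (\<Sum>m\<le>k'. Zs s m)"
      using Zs_nonneg by (intro member_le_sum) auto
    then have "s * Zs s k' \<le> s * (\<Sum>m\<le>k'. Zs s m)"
      using assms by simp
    have "(1 + 2 * s) ^ k = (1 + 2 * s) * (1 + 2 * s) ^ k'"
      using Suc by simp
    also have "\<dots> \<le> (1 + 2 * s) * Zs s k'"
      using less[of k'] Suc assms by simp
    also have "\<dots> \<le> 1 + (1 + s) * Zs s k' + s * (\<Sum>m\<le>k'. Zs s m)"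
      using \<open>s * Zs s k' \<le> s * (\<Sum>m\<le>k'. Zs s m)\<close> by (simp add: algebra_simps)
    also have "\<dots> = Zs s k"
      using Zs_Suc[OF assms] Suc by simp
    finally show ?thesis .
  qed
qed

lemma Ws_eq_sum:
  assumes "0 < s" and "1 \<le> K"
  shows "Ws s K = s * (\<Sum>m=1..K-1. Zs s m)"
proof -
  obtain k where K: "K = Suc k"
    using assms(2) by (cases K) auto
  have "(\<Sum>m\<le>k. Zs s m) = Zs s 0 + (\<Sum>m=1..k. Zs s m)"
    by (simp add: atMost_atLeast0 sum.atLeast_Suc_atMost)
  then show ?thesis
    unfolding Ws_def K using Zs_Suc[OF assms(1), of k] Zs_0[OF assms(1)] by (simp add: algebra_simps)
qed

lemma norm_diff_le_derivative_bound:
  fixes f :: "real \<Rightarrow> 'a::real_inner"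
  assumes "a \<le> b" and "continuous_on {a..b} f"
    and "\<And>u. a < u \<Longrightarrow> u < b \<Longrightarrow> (f has_vector_derivative f' u) (at u)"
    and "\<And>u. a < u \<Longrightarrow> u < b \<Longrightarrow> norm (f' u) \<le> B"
  shows "norm (f b - f a) \<le> B * (b - a)"
proof (cases "a = b")
  case False
  then have "a < b"
    using assms(1) by simp
  from mvt_general[OF this assms(2), of "\<lambda>u h. h *\<^sub>R f' u"] assms(3)
  obtain u where u: "u \<in> {a<..<b}" and mvt: "norm (f b - f a) \<le> (b - a) * norm (f' u)"
    unfolding has_vector_derivative_def using \<open>a < b\<close> by force
  have "(b - a) * norm (f' u) \<le> (b - a) * B"
    using assms(1,4) u by (intro mult_left_mono) auto
  with mvt show ?thesis
    by (simp add: mult.commute)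
qed simp

lemma norm_diff_le_derivative_bound_except:
  fixes f :: "real \<Rightarrow> 'a::real_inner"
  assumes "a \<le> b" and cont: "continuous_on {a..b} f"
    and deriv: "\<And>u. a < u \<Longrightarrow> u < b \<Longrightarrow> u \<noteq> e \<Longrightarrow> (f has_vector_derivative f' u) (at u)"
    and bound: "\<And>u. a < u \<Longrightarrow> u < b \<Longrightarrow> norm (f' u) \<le> B"
  shows "norm (f b - f a) \<le> B * (b - a)"
proof (cases "a < e \<and> e < b")
  case False
  then show ?thesis
    using norm_diff_le_derivative_bound[OF assms(1) cont, of f' B] deriv bound by force
next
  case True
  have "norm (f e - f a) \<le> B * (e - a)"
    using True deriv bound
    by (intro norm_diff_le_derivative_bound[where f' = f'] continuous_on_subset[OF cont]) auto
  moreover have "norm (f b - f e) \<le> B * (b - e)"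
    using True deriv bound
    by (intro norm_diff_le_derivative_bound[where f' = f'] continuous_on_subset[OF cont]) auto
  ultimately have "norm (f b - f a) \<le> B * (b - e) + B * (e - a)"
    by (intro norm_diff_triangle_le) auto
  then show ?thesis
    by (simp add: algebra_simps)
qed

lemma norm_diff_le_diam0:
  fixes f :: "nat \<Rightarrow> real \<Rightarrow> 'a::real_normed_vector"
  assumes cont: "\<And>i. i \<in> {1..N} \<Longrightarrow> continuous_on {-\<tau>..0} (f i)"
    and "i \<in> {1..N}" "j \<in> {1..N}" "s \<in> {-\<tau>..0}" "t \<in> {-\<tau>..0}"
  shows "norm (f i s - f j t) \<le> diam0 N \<tau> f"
proof -
  have "bounded (\<Union>i\<in>{1..N}. f i ` {-\<tau>..0})"
    using cont by (intro bounded_UN ballI compact_imp_bounded compact_continuous_image) auto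
  then obtain M where M: "\<And>i s. i \<in> {1..N} \<Longrightarrow> s \<in> {-\<tau>..0} \<Longrightarrow> norm (f i s) \<le> M"
    unfolding bounded_iff by blast
  have "norm (f i' s' - f j' t') \<le> 2 * M"
    if "i' \<in> {1..N}" "j' \<in> {1..N}" "s' \<in> {-\<tau>..0}" "t' \<in> {-\<tau>..0}" for i' j' s' t'
    using M[of i' s'] M[of j' t'] norm_triangle_ineq4[of "f i' s'" "f j' t'"] that by linarith
  then have "bdd_above ((\<lambda>p. norm (f (fst (fst p)) (fst (snd p)) - f (snd (fst p)) (snd (snd p))))
      ` (({1..N} \<times> {1..N}) \<times> ({-\<tau>..0} \<times> {-\<tau>..0})))"
    by (intro bdd_aboveI2[where M = "2 * M"]) auto
  then show ?thesis
    unfolding diam0_def using assms(2-) by (intro cSUP_upper2[where x = "((i, j), (s, t))"]) auto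
qed

lemma diam0_cong:
  assumes "\<And>i t. i \<in> {1..N} \<Longrightarrow> t \<in> {-\<tau>..0} \<Longrightarrow> f i t = g i t"
  shows "diam0 N \<tau> f = diam0 N \<tau> g"
  unfolding diam0_def using assms by (intro SUP_cong) auto

lemma norm_average_le:
  fixes w :: "'b \<Rightarrow> 'a::real_normed_vector"
  assumes "finite J" and "J \<noteq> {}"
    and "\<And>j. j \<in> J \<Longrightarrow> 0 \<le> a j" and "\<And>j. j \<in> J \<Longrightarrow> a j \<le> 1"
    and "\<And>j. j \<in> J \<Longrightarrow> norm (w j) \<le> B"
  shows "norm (\<Sum>j\<in>J. (1 / real (card J) * a j) *\<^sub>R w j) \<le> B"
proof -
  have "norm (\<Sum>j\<in>J. (1 / real (card J) * a j) *\<^sub>R w j)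
      \<le> (\<Sum>j\<in>J. norm ((1 / real (card J) * a j) *\<^sub>R w j))"
    by (rule norm_sum)
  also have "\<dots> \<le> (\<Sum>j\<in>J. 1 / real (card J) * B)"
  proof (rule sum_mono)
    fix j assume "j \<in> J"
    then have "norm ((1 / real (card J) * a j) *\<^sub>R w j) = 1 / real (card J) * a j * norm (w j)"
      using assms(3) by simp
    also have "\<dots> \<le> 1 / real (card J) * 1 * B"
      using \<open>j \<in> J\<close> assms(3-5) by (intro mult_mono) auto
    finally show "norm ((1 / real (card J) * a j) *\<^sub>R w j) \<le> 1 / real (card J) * B"
      by simp
  qed
  also have "\<dots> = B"
    using assms(1,2) by simp
  finally show ?thesis .
qed

lemma norm_diff_le_stepwise_derivative_bounds:
  fixes g :: "real \<Rightarrow> 'a::real_inner"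
  assumes "0 < h" and cont: "continuous_on {0..} g"
    and deriv: "\<And>u. 0 < u \<Longrightarrow> u \<noteq> e \<Longrightarrow> (g has_vector_derivative g' u) (at u)"
    and bound: "\<And>l u. real l * h < u \<Longrightarrow> u \<le> real (Suc l) * h \<Longrightarrow> norm (g' u) \<le> c (Suc l)"
    and "0 \<le> t" and "t \<le> real m * h"
  shows "norm (g t - g 0) \<le> h * (\<Sum>l=1..m. c l)"
  using assms(5,6)
proof (induction m arbitrary: t)
  case 0
  then show ?case by simp
next
  case (Suc m)
  define t' where "t' = min t (real m * h)"
  have "0 \<le> norm (g' (real (Suc m) * h))"
    by simp
  also have "\<dots> \<le> c (Suc m)"
    using \<open>0 < h\<close> by (intro bound) auto
  finally have "0 \<le> c (Suc m)" .
  have "norm (g t - g t') \<le> c (Suc m) * (t - t')"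
  proof (rule norm_diff_le_derivative_bound_except[where e = e])
    show "continuous_on {t'..t} g"
      using Suc.prems \<open>0 < h\<close> by (intro continuous_on_subset[OF cont]) (auto simp: t'_def)
  next
    fix u assume "t' < u" "u < t"
    moreover have "0 \<le> real m * h"
      using \<open>0 < h\<close> by simp
    ultimately have "real m * h < u" "0 < u"
      using Suc.prems by (auto simp: t'_def)
    then show "u \<noteq> e \<Longrightarrow> (g has_vector_derivative g' u) (at u)"
      using deriv by blast
    show "norm (g' u) \<le> c (Suc m)"
      using \<open>real m * h < u\<close> \<open>u < t\<close> Suc.prems by (intro bound) auto
  qed (auto simp: t'_def)
  also have "\<dots> \<le> c (Suc m) * h"
    using Suc.prems \<open>0 < h\<close> \<open>0 \<le> c (Suc m)\<close>
    by (intro mult_left_mono) (auto simp: t'_def min_def algebra_simps)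
  finally have "norm (g t - g t') \<le> h * c (Suc m)"
    by (simp add: mult.commute)
  moreover have "norm (g t' - g 0) \<le> h * (\<Sum>l=1..m. c l)"
    using Suc.prems \<open>0 < h\<close> by (intro Suc.IH) (auto simp: t'_def)
  ultimately have "norm (g t - g 0) \<le> h * c (Suc m) + h * (\<Sum>l=1..m. c l)"
    by (rule norm_diff_triangle_le)
  then show ?case
    by (simp add: algebra_simps)
qed

locale delayed_cucker_smale =
  fixes N :: nat and \<sigma> \<tau> :: real and \<psi> :: "real \<Rightarrow> real"
    and x v :: "nat \<Rightarrow> real \<Rightarrow> 'a::real_inner"
  assumes N_ge_2: "2 \<le> N"
    and sigma_pos: "0 < \<sigma>" and sigma_le_tau: "\<sigma> \<le> \<tau>"
    and psi_nonneg: "\<And>r. 0 \<le> r \<Longrightarrow> 0 \<le> \<psi> r"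
    and psi_le_1: "\<And>r. 0 \<le> r \<Longrightarrow> \<psi> r \<le> 1"
    and x_cont: "\<And>i. i \<in> {1..N} \<Longrightarrow> continuous_on {-\<tau>..} (x i)"
    and v_cont: "\<And>i. i \<in> {1..N} \<Longrightarrow> continuous_on {-\<tau>..} (v i)"
    \<comment> \<open>at 0 the history meets the solution, and only one-sided derivatives are given there\<close>
    and x_deriv: "\<And>i t. i \<in> {1..N} \<Longrightarrow> -\<tau> < t \<Longrightarrow> t \<noteq> 0 \<Longrightarrow>
        (x i has_vector_derivative v i t) (at t)"
    and v_deriv: "\<And>i t. i \<in> {1..N} \<Longrightarrow> 0 < t \<Longrightarrow>
        (v i has_vector_derivative
           (\<Sum>j\<in>{1..N} - {i}.
              ((1 / (real N - 1)) * \<psi> (norm (x i (t - \<sigma>) - x j (t - \<tau>))))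
                *\<^sub>R (v j (t - \<tau>) - v i (t - \<sigma>)))) (at t)"
begin

lemma tau_pos: "0 < \<tau>"
  using sigma_pos sigma_le_tau by simp

lemma norm_diff_le_diam0_x:
  "i \<in> {1..N} \<Longrightarrow> j \<in> {1..N} \<Longrightarrow> s \<in> {-\<tau>..0} \<Longrightarrow> t \<in> {-\<tau>..0} \<Longrightarrow>
    norm (x i s - x j t) \<le> diam0 N \<tau> x"
  using x_cont by (intro norm_diff_le_diam0 continuous_on_subset[OF x_cont]) auto

lemma norm_diff_le_diam0_v:
  "i \<in> {1..N} \<Longrightarrow> j \<in> {1..N} \<Longrightarrow> s \<in> {-\<tau>..0} \<Longrightarrow> t \<in> {-\<tau>..0} \<Longrightarrow>
    norm (v i s - v j t) \<le> diam0 N \<tau> v"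
  using v_cont by (intro norm_diff_le_diam0 continuous_on_subset[OF v_cont]) auto

lemma diam0_v_nonneg: "0 \<le> diam0 N \<tau> v"
  using norm_diff_le_diam0_v[of 1 1 0 0] N_ge_2 tau_pos by simp

definition force :: "nat \<Rightarrow> real \<Rightarrow> 'a" where
  "force i t = (\<Sum>j\<in>{1..N} - {i}.
      ((1 / (real N - 1)) * \<psi> (norm (x i (t - \<sigma>) - x j (t - \<tau>)))) *\<^sub>R (v j (t - \<tau>) - v i (t - \<sigma>)))"

lemma v_has_derivative_force:
  "i \<in> {1..N} \<Longrightarrow> 0 < t \<Longrightarrow> (v i has_vector_derivative force i t) (at t)"
  unfolding force_def by (rule v_deriv)

lemma norm_force_le:
  assumes "i \<in> {1..N}" and "\<And>j. j \<in> {1..N} \<Longrightarrow> norm (v j (t - \<tau>) - v i (t - \<sigma>)) \<le> B"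
  shows "norm (force i t) \<le> B"
proof -
  have "real (card ({1..N} - {i})) = real N - 1"
    using assms(1) N_ge_2 by (simp add: of_nat_diff)
  moreover have "(if i = 1 then 2 else 1) \<in> {1..N} - {i}"
    using assms(1) N_ge_2 by auto
  then have "{1..N} - {i} \<noteq> {}"
    by blast
  ultimately show ?thesis
    unfolding force_def
    using norm_average_le[of "{1..N} - {i}" "\<lambda>j. \<psi> (norm (x i (t - \<sigma>) - x j (t - \<tau>)))"
        "\<lambda>j. v j (t - \<tau>) - v i (t - \<sigma>)" B] assms(2) psi_nonneg psi_le_1
    by simp
qed

lemma velocity_spread:
  assumes "i \<in> {1..N}" "j \<in> {1..N}" "s \<in> {-\<tau>..real k * \<sigma>}" "t \<in> {-\<tau>..real k * \<sigma>}"
  shows "norm (v i s - v j t) \<le> (1 + 2 * \<sigma>) ^ k * diam0 N \<tau> v"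
  using assms
proof (induction k arbitrary: i j s t)
  case 0
  then show ?case
    using norm_diff_le_diam0_v by simp
next
  case (Suc k)
  define B where "B = (1 + 2 * \<sigma>) ^ k * diam0 N \<tau> v"
  have "0 \<le> B"
    unfolding B_def using sigma_pos diam0_v_nonneg by simp
  have "0 \<le> real k * \<sigma>"
    using sigma_pos by simp
  have drift: "norm (v i s - v i (min s (real k * \<sigma>))) \<le> \<sigma> * B"
    if "i \<in> {1..N}" and "s \<in> {-\<tau>..real (Suc k) * \<sigma>}" for i s
  proof -
    have "norm (v i s - v i (min s (real k * \<sigma>))) \<le> B * (s - min s (real k * \<sigma>))"
    proof (rule norm_diff_le_derivative_bound)
      show "continuous_on {min s (real k * \<sigma>)..s} (v i)"
        using that tau_pos \<open>0 \<le> real k * \<sigma>\<close> by (intro continuous_on_subset[OF v_cont]) auto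
    next
      fix u assume u: "min s (real k * \<sigma>) < u" "u < s"
      then have "real k * \<sigma> < u"
        by auto
      then show "(v i has_vector_derivative force i u) (at u)"
        using v_has_derivative_force[OF \<open>i \<in> {1..N}\<close>] \<open>0 \<le> real k * \<sigma>\<close> by simp
      have "0 < u"
        using \<open>real k * \<sigma> < u\<close> \<open>0 \<le> real k * \<sigma>\<close> by linarith
      moreover have "u - \<sigma> \<le> real k * \<sigma>"
        using that u by (auto simp: algebra_simps)
      ultimately have "u - \<tau> \<in> {-\<tau>..real k * \<sigma>}" "u - \<sigma> \<in> {-\<tau>..real k * \<sigma>}"
        using sigma_le_tau by auto
      then show "norm (force i u) \<le> B"
        using \<open>i \<in> {1..N}\<close> unfolding B_def by (intro norm_force_le Suc.IH) auto
    qed auto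
    also have "\<dots> \<le> B * \<sigma>"
      using that \<open>0 \<le> B\<close> sigma_pos by (intro mult_left_mono) (auto simp: min_def algebra_simps)
    finally show ?thesis
      by (simp add: mult.commute)
  qed
  have "norm (v i (min s (real k * \<sigma>)) - v j (min t (real k * \<sigma>))) \<le> B"
    using Suc.prems tau_pos \<open>0 \<le> real k * \<sigma>\<close> unfolding B_def by (intro Suc.IH) auto
  then have "norm (v i s - v j (min t (real k * \<sigma>))) \<le> \<sigma> * B + B"
    using drift[of i s] Suc.prems by (intro norm_diff_triangle_le) auto
  moreover have "norm (v j (min t (real k * \<sigma>)) - v j t) \<le> \<sigma> * B"
    using drift[of j t] Suc.prems by (simp add: norm_minus_commute)
  ultimately have "norm (v i s - v j t) \<le> \<sigma> * B + B + \<sigma> * B"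
    by (rule norm_diff_triangle_le)
  then show ?case
    unfolding B_def by (simp add: algebra_simps)
qed

lemma position_gap_growth:
  assumes "i \<in> {1..N}" "j \<in> {1..N}" "0 \<le> t" "t \<le> real m * \<sigma>"
  shows "norm ((x j (t + \<sigma> - \<tau>) - x i t) - (x j (\<sigma> - \<tau>) - x i 0))
    \<le> \<sigma> * (\<Sum>l=1..m. (1 + 2 * \<sigma>) ^ l * diam0 N \<tau> v)"
proof -
  define g where "g u = x j (u + \<sigma> - \<tau>) - x i u" for u
  have "norm (g t - g 0) \<le> \<sigma> * (\<Sum>l=1..m. (1 + 2 * \<sigma>) ^ l * diam0 N \<tau> v)"
  proof (rule norm_diff_le_stepwise_derivative_bounds
      [where e = "\<tau> - \<sigma>" and g' = "\<lambda>u. v j (u + \<sigma> - \<tau>) - v i u"])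
    have "continuous_on {0..} (\<lambda>u. x j (u + \<sigma> - \<tau>))"
      using sigma_pos
      by (intro continuous_on_compose2[OF x_cont[OF assms(2)]] continuous_intros) auto
    moreover have "continuous_on {0..} (x i)"
      using tau_pos by (intro continuous_on_subset[OF x_cont[OF assms(1)]]) auto
    ultimately show "continuous_on {0..} g"
      unfolding g_def by (rule continuous_on_diff)
  next
    fix u :: real assume "0 < u" "u \<noteq> \<tau> - \<sigma>"
    have "((\<lambda>u. u + \<sigma> - \<tau>) has_vector_derivative 1) (at u)"
      by (auto intro!: derivative_eq_intros)
    then have "((x j \<circ> (\<lambda>u. u + \<sigma> - \<tau>)) has_vector_derivative 1 *\<^sub>R v j (u + \<sigma> - \<tau>)) (at u)"
      using \<open>0 < u\<close> \<open>u \<noteq> \<tau> - \<sigma>\<close> assms(2) sigma_pos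
      by (intro vector_diff_chain_at x_deriv) auto
    moreover have "(x i has_vector_derivative v i u) (at u)"
      using assms(1) \<open>0 < u\<close> tau_pos by (intro x_deriv) auto
    ultimately show "(g has_vector_derivative v j (u + \<sigma> - \<tau>) - v i u) (at u)"
      unfolding g_def o_def by (intro has_vector_derivative_diff) auto
  next
    fix l u assume l: "real l * \<sigma> < u" "u \<le> real (Suc l) * \<sigma>"
    have "0 \<le> real l * \<sigma>"
      using sigma_pos by simp
    with l(1) have "0 < u"
      by linarith
    then show "norm (v j (u + \<sigma> - \<tau>) - v i u) \<le> (1 + 2 * \<sigma>) ^ Suc l * diam0 N \<tau> v"
      using assms(1,2) l(2) sigma_pos sigma_le_tau by (intro velocity_spread) auto
  qed (use assms sigma_pos in auto)
  then show ?thesis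
    unfolding g_def by simp
qed

lemma position_bound:
  assumes "i \<in> {1..N}" "j \<in> {1..N}" and K: "K = (LEAST k::nat. 2 * \<tau> \<le> real k * \<sigma>)"
  shows "norm (x j \<tau> - x i (2 * \<tau> - \<sigma>)) \<le> diam0 N \<tau> x + Ws \<sigma> K * diam0 N \<tau> v"
proof -
  define D where "D = diam0 N \<tau> v"
  obtain n :: nat where "2 * \<tau> / \<sigma> \<le> real n"
    using real_arch_simple by blast
  then have "2 * \<tau> \<le> real n * \<sigma>"
    using sigma_pos by (simp add: pos_divide_le_eq)
  then have "2 * \<tau> \<le> real K * \<sigma>"
    unfolding K by (rule LeastI)
  then have "1 \<le> K"
    using tau_pos by (cases K) auto
  with \<open>2 * \<tau> \<le> real K * \<sigma>\<close> have "2 * \<tau> - \<sigma> \<le> real (K - 1) * \<sigma>"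
    by (simp add: of_nat_diff algebra_simps)
  moreover have "0 \<le> 2 * \<tau> - \<sigma>"
    using sigma_pos sigma_le_tau by simp
  ultimately have "norm ((x j \<tau> - x i (2 * \<tau> - \<sigma>)) - (x j (\<sigma> - \<tau>) - x i 0))
      \<le> \<sigma> * (\<Sum>l=1..K-1. (1 + 2 * \<sigma>) ^ l * D)"
    using position_gap_growth[OF assms(1,2)] unfolding D_def by fastforce
  also have "\<dots> \<le> \<sigma> * (\<Sum>l=1..K-1. Zs \<sigma> l) * D"
    using sigma_pos diam0_v_nonneg power_le_Zs[OF sigma_pos]
    unfolding D_def sum_distrib_right mult.assoc by (intro mult_left_mono sum_mono mult_right_mono) auto
  also have "\<dots> = Ws \<sigma> K * D"
    using Ws_eq_sum[OF sigma_pos \<open>1 \<le> K\<close>] by simp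
  finally have "norm ((x j \<tau> - x i (2 * \<tau> - \<sigma>)) - (x j (\<sigma> - \<tau>) - x i 0)) \<le> Ws \<sigma> K * D" .
  moreover have "norm (x j (\<sigma> - \<tau>) - x i 0) \<le> diam0 N \<tau> x"
    using assms(1,2) sigma_pos sigma_le_tau tau_pos by (intro norm_diff_le_diam0_x) auto
  ultimately show ?thesis
    unfolding D_def using norm_triangle_sub[of "x j \<tau> - x i (2 * \<tau> - \<sigma>)" "x j (\<sigma> - \<tau>) - x i 0"]
    by linarith
qed

end

theorem lemma4p5:
  fixes N :: nat and \<sigma> \<tau> :: real and \<psi> :: "real \<Rightarrow> real"
    and x0 v0 x v :: "nat \<Rightarrow> real \<Rightarrow> real ^ 'd"
  assumes N2: "N \<ge> 2"
    and sigma_pos: "0 < \<sigma>" and sigma_le_tau: "\<sigma> \<le> \<tau>"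
    and psi_cont: "continuous_on {0..} \<psi>"
    and psi_noninc: "\<And>r s. 0 \<le> r \<Longrightarrow> r \<le> s \<Longrightarrow> \<psi> s \<le> \<psi> r"
    and psi_pos: "\<And>r. 0 \<le> r \<Longrightarrow> 0 < \<psi> r"
    and psi_le1: "\<And>r. 0 \<le> r \<Longrightarrow> \<psi> r \<le> 1"
    and x0_deriv: "\<And>i t. i \<in> {1..N} \<Longrightarrow> t \<in> {-\<tau>..0} \<Longrightarrow>
        (x0 i has_vector_derivative v0 i t) (at t within {-\<tau>..0})"
    and v0_cont: "\<And>i. i \<in> {1..N} \<Longrightarrow> continuous_on {-\<tau>..0} (v0 i)"
    and x_init: "\<And>i t. i \<in> {1..N} \<Longrightarrow> t \<in> {-\<tau>..0} \<Longrightarrow> x i t = x0 i t"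
    and v_init: "\<And>i t. i \<in> {1..N} \<Longrightarrow> t \<in> {-\<tau>..0} \<Longrightarrow> v i t = v0 i t"
    and x_cont: "\<And>i. i \<in> {1..N} \<Longrightarrow> continuous_on {-\<tau>..} (x i)"
    and v_cont: "\<And>i. i \<in> {1..N} \<Longrightarrow> continuous_on {-\<tau>..} (v i)"
    and x_ode: "\<And>i t. i \<in> {1..N} \<Longrightarrow> t > 0 \<Longrightarrow>
        (x i has_vector_derivative v i t) (at t)"
    and v_ode: "\<And>i t. i \<in> {1..N} \<Longrightarrow> t > 0 \<Longrightarrow>
        (v i has_vector_derivative
           (\<Sum>j\<in>{1..N} - {i}.
              ((1 / (real N - 1)) * \<psi> (norm (x i (t - \<sigma>) - x j (t - \<tau>))))
                *\<^sub>R (v j (t - \<tau>) - v i (t - \<sigma>)))) (at t)"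
    and K_def: "K = (LEAST k::nat. real k * \<sigma> \<ge> 2 * \<tau>)"
  shows "\<forall>i\<in>{1..N}. \<forall>j\<in>{1..N}.
           norm (x j \<tau> - x i (2 * \<tau> - \<sigma>)) \<le> diam0 N \<tau> x0 + Ws \<sigma> K * diam0 N \<tau> v0"
proof -
  have x_deriv: "(x i has_vector_derivative v i t) (at t)"
    if "i \<in> {1..N}" "-\<tau> < t" "t \<noteq> 0" for i t
  proof (cases "0 < t")
    case True
    then show ?thesis
      using x_ode that(1) by blast
  next
    case False
    with that have t: "t \<in> {-\<tau><..<0}"
      by auto
    then have "(x0 i has_vector_derivative v i t) (at t)"
      using x0_deriv[OF that(1), of t] v_init[OF that(1), of t] by (simp add: at_within_Icc_at)
    then show ?thesis
      by (rule has_vector_derivative_transform_within_open[where S = "{-\<tau><..<0}"])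
        (use t x_init[OF that(1)] in auto)
  qed
  interpret delayed_cucker_smale N \<sigma> \<tau> \<psi> x v
    using N2 sigma_pos sigma_le_tau psi_pos psi_le1 x_cont v_cont x_deriv v_ode
    by unfold_locales (auto simp: less_imp_le)
  have "diam0 N \<tau> x0 = diam0 N \<tau> x" "diam0 N \<tau> v0 = diam0 N \<tau> v"
    using x_init v_init by (auto intro: diam0_cong)
  then show ?thesis
    using position_bound K_def by simp
qed

end
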